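(* Let $n\ge1$, $1\le M\le 2^{n-1}$, $a:=M/2^n$, and let $f:\{-1,1\}^n\to\{-1,1\}$ satisfy $|f^{-1}(1)|=M$. For every even $m$ with $2\le m\le n$, $\mathbf{W}_m\le 4a(1-a)$. For every odd $m$ with $3\le m\le n$, $\mathbf{W}_m\le 2a$.
   Context: For $f:\{-1,1\}^n\to\{-1,1\}$ and $S\subseteq[1:n]$, the Fourier coefficient is $\hat f_S:=\mathbb{E}_{\mathbf{x}\sim\mathrm{Unif}\{-1,1\}^n}[f(\mathbf{x})\prod_{i\in S}x_i]$, and the degree-$m$ Fourier weight is $\mathbf{W}_m:=\sum_{S:|S|=m}\hat f_S^{2}$. *)

theory Defs
  imports "HOL-Analysis.Analysis"
begin

text \<open>The Boolean cube {-1,1}^n, coordinates indexed by 0..n-1 (the paper's 1..n),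
  points represented as functions nat => real that vanish outside {0..<n}.\<close>
definition cube :: "nat \<Rightarrow> (nat \<Rightarrow> real) set" where
  "cube n = {x. (\<forall>i<n. x i = -1 \<or> x i = 1) \<and> (\<forall>i\<ge>n. x i = 0)}"

definition fourier_coeff :: "nat \<Rightarrow> ((nat \<Rightarrow> real) \<Rightarrow> real) \<Rightarrow> nat set \<Rightarrow> real" where
  "fourier_coeff n f S = (\<Sum>x\<in>cube n. f x * (\<Prod>i\<in>S. x i)) / 2 ^ n"

definition fourier_weight :: "nat \<Rightarrow> ((nat \<Rightarrow> real) \<Rightarrow> real) \<Rightarrow> nat \<Rightarrow> real" where
  "fourier_weight n f m = (\<Sum>S\<in>{S. S \<subseteq> {0..<n} \<and> card S = m}. (fourier_coeff n f S)^2)"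

end

theory Submission
  imports Defs
begin

text \<open>Both bounds are Bessel's inequality for the orthonormal characters \<open>\<chi>\<^sub>S x = \<Prod>i\<in>S. x i\<close>.
  For even \<open>m\<close> the degree-0 coefficient \<open>2a - 1\<close> is set aside, leaving at most
  \<open>1 - (2a - 1)\<^sup>2 = 4a(1 - a)\<close>. For odd \<open>m\<close> the coefficients of \<open>f\<close> agree with those of its odd
  part \<open>g x = (f x - f (-x)) / 2\<close>, and \<open>g\<^sup>2\<close> is at most the number of \<open>x, -x\<close> at which \<open>f\<close>
  equals \<open>1\<close>, whose average is \<open>2a\<close>.\<close>

definition cube_vertex :: "nat \<Rightarrow> nat set \<Rightarrow> nat \<Rightarrow> real" where
  "cube_vertex n B = (\<lambda>i. if i \<in> B then 1 else if i < n then -1 else 0)"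

lemma bij_betw_cube_vertex: "bij_betw (cube_vertex n) (Pow {0..<n}) (cube n)"
proof (rule bij_betw_imageI)
  show "inj_on (cube_vertex n) (Pow {0..<n})"
  proof (rule inj_onI)
    fix A B assume "cube_vertex n A = cube_vertex n B"
    hence "\<forall>i. (cube_vertex n A i = 1) = (cube_vertex n B i = 1)" by simp
    thus "A = B" unfolding cube_vertex_def by (auto split: if_splits)
  qed
  show "cube_vertex n ` Pow {0..<n} = cube n"
  proof
    show "cube_vertex n ` Pow {0..<n} \<subseteq> cube n" unfolding cube_vertex_def cube_def by auto
    show "cube n \<subseteq> cube_vertex n ` Pow {0..<n}"
    proof
      fix x assume "x \<in> cube n"
      hence "x = cube_vertex n {i. i < n \<and> x i = 1}"
        unfolding cube_vertex_def cube_def by (auto intro!: ext)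
      moreover have "{i. i < n \<and> x i = 1} \<in> Pow {0..<n}" by auto
      ultimately show "x \<in> cube_vertex n ` Pow {0..<n}" by blast
    qed
  qed
qed

lemma finite_cube [simp]: "finite (cube n)"
  using bij_betw_finite[OF bij_betw_cube_vertex] by simp

lemma card_cube: "card (cube n) = 2 ^ n"
  using bij_betw_same_card[OF bij_betw_cube_vertex] by (simp add: card_Pow)

lemma flip_in_cube: "i < n \<Longrightarrow> x \<in> cube n \<Longrightarrow> x(i := - x i) \<in> cube n"
  unfolding cube_def by auto

lemma sum_cube_flip:
  assumes "i < n"
  shows "sum g (cube n) = (\<Sum>x\<in>cube n. g (x(i := - x i)))"
  by (rule sum.reindex_bij_witness[where i="\<lambda>x. x(i := - x i)" and j="\<lambda>x. x(i := - x i)"])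
     (auto simp: flip_in_cube assms)

lemma sum_cube_uminus: "sum g (cube n) = (\<Sum>x\<in>cube n. g (\<lambda>i. - x i))"
  by (rule sum.reindex_bij_witness[where i="\<lambda>x i. - x i" and j="\<lambda>x i. - x i"])
     (auto simp: cube_def)

lemma prod_flip:
  fixes x :: "nat \<Rightarrow> real"
  assumes "finite S"
  shows "prod (x(i := - x i)) S = (if i \<in> S then - prod x S else prod x S)"
proof (cases "i \<in> S")
  case True
  have "prod (x(i := - x i)) (S - {i}) = prod x (S - {i})"
    by (rule prod.cong) auto
  with True show ?thesis by (simp add: prod.remove[OF assms])
qed (auto intro: prod.cong)

lemma prod_uminus: "(\<Prod>i\<in>S. - (x :: nat \<Rightarrow> real) i) = (-1) ^ card S * prod x S"
proof -
  have "(\<Prod>i\<in>S. - x i) = (\<Prod>i\<in>S. (-1) * x i)" by simp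
  also have "\<dots> = (-1) ^ card S * prod x S" by (subst prod.distrib) simp
  finally show ?thesis .
qed

lemma sum_cube_character_product:
  assumes "S \<subseteq> {0..<n}" "T \<subseteq> {0..<n}"
  shows "(\<Sum>x\<in>cube n. prod x S * prod x T) = (if S = T then 2 ^ n else 0)"
proof (cases "S = T")
  case True
  have "prod x S * prod x T = 1" if "x \<in> cube n" for x
  proof -
    have "prod x S * prod x T = (\<Prod>i\<in>S. x i * x i)"
      using True by (simp add: prod.distrib)
    also have "\<dots> = 1"
      using that assms(1) by (intro prod.neutral) (auto simp: cube_def subset_eq)
    finally show ?thesis .
  qed
  thus ?thesis using True by (simp add: card_cube)
next
  case False
  have fin: "finite S" "finite T" using assms finite_subset by auto
  obtain i where i: "i \<in> S \<longleftrightarrow> i \<notin> T"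
    using False by blast
  hence "i < n" using assms by auto
  \<comment> \<open>flipping a coordinate in exactly one of \<open>S, T\<close> negates every summand\<close>
  have "(\<Sum>x\<in>cube n. prod x S * prod x T)
      = (\<Sum>x\<in>cube n. prod (x(i := - x i)) S * prod (x(i := - x i)) T)"
    by (rule sum_cube_flip[OF \<open>i < n\<close>])
  also have "\<dots> = - (\<Sum>x\<in>cube n. prod x S * prod x T)"
    unfolding sum_negf[symmetric] prod_flip[OF fin(1)] prod_flip[OF fin(2)] using i by auto
  finally show ?thesis using False by simp
qed

lemma bessel_inequality:
  assumes "F \<subseteq> Pow {0..<n}"
  shows "(\<Sum>S\<in>F. (fourier_coeff n g S)\<^sup>2) \<le> (\<Sum>x\<in>cube n. (g x)\<^sup>2) / 2 ^ n"
proof -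
  define N :: real where "N = 2 ^ n"
  define c where "c = fourier_coeff n g"
  define p where "p = (\<lambda>x. \<Sum>S\<in>F. c S * prod x S)"
  have finF: "finite F" using assms finite_subset by blast
  have coeff: "(\<Sum>x\<in>cube n. g x * prod x S) = N * c S" for S
    unfolding c_def fourier_coeff_def N_def by simp
  have "(\<Sum>x\<in>cube n. g x * p x) = (\<Sum>x\<in>cube n. \<Sum>S\<in>F. c S * (g x * prod x S))"
    unfolding p_def by (simp add: sum_distrib_left algebra_simps)
  also have "\<dots> = (\<Sum>S\<in>F. c S * (\<Sum>x\<in>cube n. g x * prod x S))"
    by (subst sum.swap) (simp add: sum_distrib_left)
  finally have "(\<Sum>x\<in>cube n. g x * p x) = (\<Sum>S\<in>F. c S * (\<Sum>x\<in>cube n. g x * prod x S))" .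
  hence cross: "(\<Sum>x\<in>cube n. g x * p x) = N * (\<Sum>S\<in>F. (c S)\<^sup>2)"
    by (simp add: coeff sum_distrib_left power2_eq_square mult_ac)
  have "(\<Sum>x\<in>cube n. (p x)\<^sup>2)
      = (\<Sum>x\<in>cube n. \<Sum>S\<in>F. \<Sum>T\<in>F. c S * c T * (prod x S * prod x T))"
    unfolding p_def power2_eq_square by (simp add: sum_product algebra_simps)
  also have "\<dots> = (\<Sum>S\<in>F. \<Sum>T\<in>F. c S * c T * (\<Sum>x\<in>cube n. prod x S * prod x T))"
    by (subst sum.swap) (simp add: sum.swap[of _ F "cube n"] sum_distrib_left)
  also have "\<dots> = (\<Sum>S\<in>F. \<Sum>T\<in>F. c S * c T * (if S = T then N else 0))"
    using assms by (intro sum.cong refl) (simp add: sum_cube_character_product N_def subset_eq)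
  also have "\<dots> = N * (\<Sum>S\<in>F. (c S)\<^sup>2)"
    by (simp add: finF if_distrib sum_distrib_left power2_eq_square mult_ac cong: if_cong)
  finally have square: "(\<Sum>x\<in>cube n. (p x)\<^sup>2) = N * (\<Sum>S\<in>F. (c S)\<^sup>2)" .
  have "0 \<le> (\<Sum>x\<in>cube n. (g x - p x)\<^sup>2)"
    by (simp add: sum_nonneg)
  also have "\<dots> = (\<Sum>x\<in>cube n. (g x)\<^sup>2) - 2 * (\<Sum>x\<in>cube n. g x * p x) + (\<Sum>x\<in>cube n. (p x)\<^sup>2)"
    by (simp add: power2_diff sum.distrib sum_subtractf sum_distrib_left mult.assoc)
  finally have "N * (\<Sum>S\<in>F. (c S)\<^sup>2) \<le> (\<Sum>x\<in>cube n. (g x)\<^sup>2)"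
    by (simp add: cross square)
  thus ?thesis unfolding c_def N_def by (simp add: field_simps)
qed

lemma fourier_weight_le_energy_minus_mean_sq:
  assumes "m \<ge> 1"
  shows "fourier_weight n g m \<le> (\<Sum>x\<in>cube n. (g x)\<^sup>2) / 2 ^ n - (fourier_coeff n g {})\<^sup>2"
proof -
  define F where "F = {S. S \<subseteq> {0..<n} \<and> card S = m}"
  have "finite F" unfolding F_def by (rule finite_subset[of _ "Pow {0..<n}"]) auto
  moreover have "{} \<notin> F" using assms unfolding F_def by auto
  moreover have "(\<Sum>S\<in>insert {} F. (fourier_coeff n g S)\<^sup>2) \<le> (\<Sum>x\<in>cube n. (g x)\<^sup>2) / 2 ^ n"
    by (rule bessel_inequality) (auto simp: F_def)
  ultimately show ?thesis unfolding fourier_weight_def F_def[symmetric] by simp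
qed

definition odd_part :: "((nat \<Rightarrow> real) \<Rightarrow> real) \<Rightarrow> (nat \<Rightarrow> real) \<Rightarrow> real" where
  "odd_part g x = (g x - g (\<lambda>i. - x i)) / 2"

lemma fourier_coeff_odd_part:
  assumes "odd (card S)"
  shows "fourier_coeff n (odd_part g) S = fourier_coeff n g S"
proof -
  have "(\<Sum>x\<in>cube n. g (\<lambda>i. - x i) * prod x S)
      = (\<Sum>x\<in>cube n. g x * (\<Prod>i\<in>S. - x i))"
    by (subst sum_cube_uminus) simp
  also have "\<dots> = - (\<Sum>x\<in>cube n. g x * prod x S)"
    using assms by (simp add: prod_uminus sum_negf)
  finally have "(\<Sum>x\<in>cube n. g (\<lambda>i. - x i) * prod x S) = - (\<Sum>x\<in>cube n. g x * prod x S)" .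
  thus ?thesis
    unfolding fourier_coeff_def odd_part_def
    by (simp add: sum_subtractf sum_divide_distrib[symmetric] left_diff_distrib)
qed

lemma fourier_weight_odd_le_odd_part_energy:
  assumes "odd m"
  shows "fourier_weight n g m \<le> (\<Sum>x\<in>cube n. (odd_part g x)\<^sup>2) / 2 ^ n"
proof -
  have "fourier_weight n g m = fourier_weight n (odd_part g) m"
    unfolding fourier_weight_def using assms by (simp add: fourier_coeff_odd_part)
  also have "\<dots> \<le> (\<Sum>x\<in>cube n. (odd_part g x)\<^sup>2) / 2 ^ n"
    unfolding fourier_weight_def by (rule bessel_inequality) auto
  finally show ?thesis .
qed

context
  fixes n M :: nat and f :: "(nat \<Rightarrow> real) \<Rightarrow> real"
  assumes boolean: "\<forall>x\<in>cube n. f x = -1 \<or> f x = 1"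
    and card_ones: "card {x\<in>cube n. f x = 1} = M"
begin

lemma sum_indicator_ones: "(\<Sum>x\<in>cube n. (f x + 1) / 2) = real M"
proof -
  have "(\<Sum>x\<in>cube n. (f x + 1) / 2) = (\<Sum>x\<in>cube n. if f x = 1 then 1 else 0)"
    using boolean by (intro sum.cong) auto
  also have "\<dots> = real M"
    using card_ones by (simp add: sum.If_cases Int_def)
  finally show ?thesis .
qed

lemma fourier_coeff_empty_boolean: "fourier_coeff n f {} = 2 * (real M / 2 ^ n) - 1"
proof -
  have "(\<Sum>x\<in>cube n. f x) = 2 * (\<Sum>x\<in>cube n. (f x + 1) / 2) - 2 ^ n"
    by (simp add: sum.distrib sum_divide_distrib[symmetric] card_cube field_simps)
  thus ?thesis
    unfolding fourier_coeff_def sum_indicator_ones by (simp add: field_simps)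
qed

lemma energy_boolean: "(\<Sum>x\<in>cube n. (f x)\<^sup>2) = 2 ^ n"
proof -
  have "(\<Sum>x\<in>cube n. (f x)\<^sup>2) = (\<Sum>x\<in>cube n. 1)"
    using boolean by (intro sum.cong) auto
  thus ?thesis by (simp add: card_cube)
qed

lemma odd_part_energy_boolean: "(\<Sum>x\<in>cube n. (odd_part f x)\<^sup>2) \<le> 2 * real M"
proof -
  \<comment> \<open>\<open>(odd_part f x)\<^sup>2\<close> is \<open>1\<close> if \<open>f x \<noteq> f (-x)\<close> and \<open>0\<close> otherwise\<close>
  have "(\<Sum>x\<in>cube n. (odd_part f x)\<^sup>2)
      \<le> (\<Sum>x\<in>cube n. (f x + 1) / 2 + (f (\<lambda>i. - x i) + 1) / 2)"
  proof (rule sum_mono)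
    fix x assume x: "x \<in> cube n"
    hence "(\<lambda>i. - x i) \<in> cube n" by (auto simp: cube_def)
    hence "f x = -1 \<or> f x = 1" "f (\<lambda>i. - x i) = -1 \<or> f (\<lambda>i. - x i) = 1"
      using boolean x by auto
    thus "(odd_part f x)\<^sup>2 \<le> (f x + 1) / 2 + (f (\<lambda>i. - x i) + 1) / 2"
      unfolding odd_part_def by (auto simp: power2_eq_square)
  qed
  also have "\<dots> = 2 * real M"
    using sum_indicator_ones sum_cube_uminus[of "\<lambda>x. (f x + 1) / 2" n]
    by (simp add: sum.distrib)
  finally show ?thesis .
qed

end

theorem theorem3:
  fixes n M :: nat and f :: "(nat \<Rightarrow> real) \<Rightarrow> real"
  assumes "n \<ge> 1"
    and "1 \<le> M" and "M \<le> 2 ^ (n - 1)"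
    and "\<forall>x\<in>cube n. f x = -1 \<or> f x = 1"
    and "card {x\<in>cube n. f x = 1} = M"
  shows "(\<forall>m. even m \<and> 2 \<le> m \<and> m \<le> n \<longrightarrow>
            fourier_weight n f m \<le> 4 * (real M / 2 ^ n) * (1 - real M / 2 ^ n))
       \<and> (\<forall>m. odd m \<and> 3 \<le> m \<and> m \<le> n \<longrightarrow>
            fourier_weight n f m \<le> 2 * (real M / 2 ^ n))"
proof (intro conjI allI impI)
  have quadratic: "1 - (2 * a - 1)\<^sup>2 = 4 * a * (1 - a)" for a :: real
    by (simp add: power2_eq_square algebra_simps)
  fix m :: nat assume "even m \<and> 2 \<le> m \<and> m \<le> n"
  hence "fourier_weight n f m \<le> 1 - (2 * (real M / 2 ^ n) - 1)\<^sup>2"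
    using fourier_weight_le_energy_minus_mean_sq[of m n f]
      energy_boolean[OF assms(4,5)] fourier_coeff_empty_boolean[OF assms(4,5)] by simp
  also have "\<dots> = 4 * (real M / 2 ^ n) * (1 - real M / 2 ^ n)"
    by (rule quadratic)
  finally show "fourier_weight n f m \<le> 4 * (real M / 2 ^ n) * (1 - real M / 2 ^ n)" .
next
  fix m :: nat assume "odd m \<and> 3 \<le> m \<and> m \<le> n"
  hence "fourier_weight n f m \<le> (\<Sum>x\<in>cube n. (odd_part f x)\<^sup>2) / 2 ^ n"
    by (simp add: fourier_weight_odd_le_odd_part_energy)
  also have "\<dots> \<le> 2 * real M / 2 ^ n"
    using odd_part_energy_boolean[OF assms(4,5)] by (simp add: divide_right_mono)
  finally show "fourier_weight n f m \<le> 2 * (real M / 2 ^ n)" by simp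
qed

end
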